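(* In the Setting below and under the Standing Assumption, let $x\in\mathbb{Q}\cap D$ be such that the Lyapunov exponent $\lambda(x)$ exists. Then for every $p\in\mathbb{Z}$, $$\sigma(x,p)\ge\frac{\max(0,\lambda(x))}{\ln 2}.$$
   Context: Setting. $D\subseteq\mathbb{R}$ is a compact interval and $f:D\to D$ is twice continuously differentiable on $D$ with $f''$ bounded. For $x\in D$ the orbit is $x_0=x$, $x_{n+1}=f(x_n)$. A floating-point number of precision $m$ is a real $s\cdot 2^{e-m}$ with $s,e\in\mathbb{Z}$, $|s|\le 2^m-1$; $rd_m(y)$ denotes rounding of $y$ to a nearest floating-point number of precision $m$. Let $L(a,e):=\sup\{|f'(y)|: y\in[a-e,a+e]\cap D\}$ and fix a function $\bar L$ with $L(a,e)\le\bar L(a,e)\le\min(\bar L_{max},\,L(a,e)+Ke)$ for constants $\bar L_{max},K\ge0$. For $x\in\mathbb{Q}\cap D$ and precision $m\ge1$ the computed sequence is $\hat x_0=rd_m(x)$, $\bar e_0=2^{-m}|\hat x_0|$, $\hat x_{n+1}=rd_m(f(\hat x_n))$, $\bar e_{n+1}=\bar L(\hat x_n,\bar e_n)\bar e_n+2^{-m}|\hat x_{n+1}|$ (all $\hat x_n$ assumed in $D$). For $N\in\mathbb{N}$, $p\in\mathbb{Z}$, $m_{min}(x,N,p)$ is the least $m\ge1$ such that the sequence computed at precision $m$ satisfies $\bar e_n\le\frac{10^{-p}}{1+10^{-p}}|\hat x_n|$ for all $n=0,\dots,N$. $\sigma(x,p):=\limsup_{N\to\infty} m_{min}(x,N,p)/N$.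 Standing Assumption: $x_n\ne0$ for all $n$ and $\lim_{N\to\infty}\mathrm{ld}(\min\{|x_n|:0\le n\le N\})/N=0$, $\mathrm{ld}=\log_2$. The Lyapunov exponent is $\lambda(x):=\lim_{n\to\infty}\frac1n\sum_{k=0}^{n-1}\ln|f'(f^k(x))|$ when the limit exists. *)

theory Defs
  imports "HOL-Analysis.Analysis"
begin

definition is_float :: "nat \<Rightarrow> real \<Rightarrow> bool" where
  "is_float m y \<longleftrightarrow> (\<exists>s e :: int. y = real_of_int s * 2 powr (real_of_int e - real m)
                                   \<and> \<bar>s\<bar> \<le> 2 ^ m - 1)"

definition is_round_nearest :: "(nat \<Rightarrow> real \<Rightarrow> real) \<Rightarrow> bool" where
  "is_round_nearest rd \<longleftrightarrow>
     (\<forall>m y. m \<ge> 1 \<longrightarrow> is_float m (rd m y) \<and>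
        (\<forall>z. is_float m z \<longrightarrow> \<bar>rd m y - y\<bar> \<le> \<bar>z - y\<bar>))"

definition Lip :: "real set \<Rightarrow> (real \<Rightarrow> real) \<Rightarrow> real \<Rightarrow> real \<Rightarrow> real" where
  "Lip D f' a e = Sup {\<bar>f' y\<bar> | y. y \<in> {a - e..a + e} \<inter> D}"

fun comp_seq :: "(nat \<Rightarrow> real \<Rightarrow> real) \<Rightarrow> (real \<Rightarrow> real) \<Rightarrow> (real \<Rightarrow> real \<Rightarrow> real)
                  \<Rightarrow> nat \<Rightarrow> real \<Rightarrow> nat \<Rightarrow> real \<times> real" where
  "comp_seq rd f Lbar m x 0 = (rd m x, 2 powr (- real m) * \<bar>rd m x\<bar>)"
| "comp_seq rd f Lbar m x (Suc n) =
     (let (xh, e) = comp_seq rd f Lbar m x n; xh' = rd m (f xh)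
      in (xh', Lbar xh e * e + 2 powr (- real m) * \<bar>xh'\<bar>))"

definition m_min :: "(nat \<Rightarrow> real \<Rightarrow> real) \<Rightarrow> (real \<Rightarrow> real) \<Rightarrow> (real \<Rightarrow> real \<Rightarrow> real)
                  \<Rightarrow> real \<Rightarrow> nat \<Rightarrow> int \<Rightarrow> nat" where
  "m_min rd f Lbar x N p = (LEAST m. m \<ge> 1 \<and>
     (\<forall>n\<le>N. snd (comp_seq rd f Lbar m x n)
              \<le> 10 powr (- real_of_int p) / (1 + 10 powr (- real_of_int p))
                 * \<bar>fst (comp_seq rd f Lbar m x n)\<bar>))"

definition sigma :: "(nat \<Rightarrow> real \<Rightarrow> real) \<Rightarrow> (real \<Rightarrow> real) \<Rightarrow> (real \<Rightarrow> real \<Rightarrow> real)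
                  \<Rightarrow> real \<Rightarrow> int \<Rightarrow> ereal" where
  "sigma rd f Lbar x p = limsup (\<lambda>N. ereal (real (m_min rd f Lbar x N p) / real N))"

definition has_lyapunov :: "(real \<Rightarrow> real) \<Rightarrow> (real \<Rightarrow> real) \<Rightarrow> real \<Rightarrow> real \<Rightarrow> bool" where
  "has_lyapunov f f' x lam \<longleftrightarrow>
     (\<forall>k. f' ((f ^^ k) x) \<noteq> 0) \<and>
     (\<lambda>n. (1 / real n) * (\<Sum>k<n. ln \<bar>f' ((f ^^ k) x)\<bar>)) \<longlonglongrightarrow> lam"

end

theory Submission imports Defs begin

(* The computed bound ebar_n on |xhat_n - x_n| is certified: by the relative error
   bound of round-to-nearest and the mean value theorem, |xhat_n - x_n| <= ebar_n.
   Consequently f' along the true orbit is dominated by Lbar at the computed points,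
   and the recursion for ebar yields  ebar_0 * prod_{k<N} |f'(x_k)| <= ebar_N.
   Meeting the accuracy demand forces ebar_N <= |xhat_N| <= max |a| |b| and
   ebar_0 ~ 2^-m |x|, so  m * ln 2 >= sum_{k<N} ln|f'(x_k)| + const.  Dividing by N
   and passing to the limsup gives sigma >= max 0 lambda / ln 2. *)

section \<open>Floating-point rounding\<close>

text \<open>Integer mantissas up to 2^m in absolute value are representable at precision m
  (the extreme value 2^m is absorbed by halving the mantissa and raising the exponent).\<close>
lemma is_float_int:
  assumes m: "m \<ge> 1" and j: "\<bar>j\<bar> \<le> (2::int) ^ m"
  shows "is_float m (real_of_int j * 2 powr (real_of_int e - real m))"
proof (cases "\<bar>j\<bar> \<le> 2 ^ m - 1")
  case True then show ?thesis unfolding is_float_def by blast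
next
  case False
  hence jj: "\<bar>j\<bar> = 2 ^ m" using j by linarith
  obtain n where n: "m = Suc n" using m by (cases m) auto
  have pm: "(2::int) ^ m = 2 * 2 ^ n" by (simp add: n)
  define s where "s = (if j \<ge> 0 then (2::int) ^ n else - (2 ^ n))"
  have s: "j = 2 * s" using jj pm unfolding s_def by (cases "j \<ge> 0") auto
  have sb: "\<bar>s\<bar> \<le> 2 ^ m - 1" unfolding s_def pm by auto
  have ee: "real_of_int (e + 1) - real m = 1 + (real_of_int e - real m)" by simp
  have "(2::real) powr (real_of_int (e + 1) - real m) = 2 * 2 powr (real_of_int e - real m)"
    unfolding ee by (simp add: powr_add)
  hence "real_of_int j * 2 powr (real_of_int e - real m)
        = real_of_int s * 2 powr (real_of_int (e + 1) - real m)"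
    by (simp add: s)
  then show ?thesis unfolding is_float_def using sb by blast
qed

lemma is_float_pow2:
  assumes m: "m \<ge> 1" and s: "\<bar>s\<bar> = 1"
  shows "is_float m (real_of_int s * 2 powr real_of_int k)"
proof -
  have "\<bar>s\<bar> \<le> 2 ^ m - 1" using s m by simp
  moreover have "real_of_int k = real_of_int (k + int m) - real m" by simp
  ultimately show ?thesis unfolding is_float_def by metis
qed

text \<open>Below 2^e, the floats of precision m have spacing 2^(e-m), so some float lies
  within half of that spacing.\<close>
lemma float_near:
  assumes m: "m \<ge> 1" and y: "\<bar>y\<bar> \<le> 2 powr real_of_int e"
  shows "\<exists>z. is_float m z \<and> \<bar>z - y\<bar> \<le> 2 powr (real_of_int e - real m) / 2"
proof -
  define u where "u = 2 powr (real_of_int e - real m)"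
  have u0: "u > 0" by (simp add: u_def)
  have "\<bar>y / u\<bar> \<le> 2 powr real_of_int e / u" using y u0 by (simp add: divide_right_mono)
  also have "\<dots> = 2 ^ m" by (simp add: u_def powr_diff[symmetric] powr_realpow)
  finally have yu: "\<bar>y / u\<bar> \<le> 2 ^ m" .
  define k where "k = \<lfloor>y / u + 1/2\<rfloor>"
  have k1: "\<bar>real_of_int k - y / u\<bar> \<le> 1/2" unfolding k_def by linarith
  have "\<bar>real_of_int k\<bar> < 2 ^ m + 1" using k1 yu by linarith
  hence "real_of_int \<bar>k\<bar> < real_of_int (2 ^ m + 1)" by simp
  hence "\<bar>k\<bar> < 2 ^ m + 1" by (simp only: of_int_less_iff)
  hence k2: "\<bar>k\<bar> \<le> 2 ^ m" by linarith
  have "\<bar>real_of_int k * u - y\<bar> = \<bar>real_of_int k - y / u\<bar> * u"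
  proof -
    have "real_of_int k * u - y = (real_of_int k - y / u) * u" using u0 by (simp add: field_simps)
    thus ?thesis using u0 by (simp add: abs_mult)
  qed
  also have "\<dots> \<le> u / 2" using k1 u0 by (simp add: mult_right_mono[of _ "1/2", simplified])
  finally show ?thesis using is_float_int[OF m k2, of e] unfolding u_def by blast
qed

text \<open>The absolute error is at most half a unit in the last
  place of the binade of y, and the rounded value cannot leave that binade downwards.\<close>
lemma round_err:
  assumes rd: "is_round_nearest rd" and m: "m \<ge> 1"
  shows "\<bar>rd m y - y\<bar> \<le> 2 powr (- real m) * \<bar>rd m y\<bar>"
proof -
  define r where "r = rd m y"
  have near: "\<And>z. is_float m z \<Longrightarrow> \<bar>r - y\<bar> \<le> \<bar>z - y\<bar>"
    using rd m unfolding is_round_nearest_def r_def by blast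
  show ?thesis
  proof (cases "y = 0")
    case True
    have "is_float m 0" unfolding is_float_def by (rule exI[of _ 0], rule exI[of _ 0]) simp
    from near[OF this] True show ?thesis by (simp add: r_def)
  next
    case False
    define e where "e = \<lfloor>log 2 \<bar>y\<bar>\<rfloor> + 1"
    have lo: "2 powr (real_of_int e - 1) \<le> \<bar>y\<bar>"
      using powr_mono[of "real_of_int e - 1" "log 2 \<bar>y\<bar>" 2] False by (simp add: e_def)
    have hi: "\<bar>y\<bar> \<le> 2 powr real_of_int e"
      using powr_mono[of "log 2 \<bar>y\<bar>" "real_of_int e" 2] False by (simp add: e_def)
    obtain z where "is_float m z" and "\<bar>z - y\<bar> \<le> 2 powr (real_of_int e - real m) / 2"
      using float_near[OF m hi] by blast
    with near have err: "\<bar>r - y\<bar> \<le> 2 powr (real_of_int e - real m) / 2" by force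
    define s :: int where "s = (if y > 0 then 1 else -1)"
    have "is_float m (real_of_int s * 2 powr real_of_int (e - 1))"
      by (rule is_float_pow2[OF m]) (simp add: s_def)
    moreover have "\<bar>real_of_int s * 2 powr real_of_int (e - 1) - y\<bar> = \<bar>y\<bar> - 2 powr (real_of_int e - 1)"
      using lo False by (auto simp: s_def)
    ultimately have "\<bar>r - y\<bar> \<le> \<bar>y\<bar> - 2 powr (real_of_int e - 1)" using near by force
    hence rbig: "2 powr (real_of_int e - 1) \<le> \<bar>r\<bar>" by linarith
    have "2 powr (real_of_int e - real m) / 2 = 2 powr (- real m) * 2 powr (real_of_int e - 1)"
      by (simp add: powr_add[symmetric] powr_diff)
    also have "\<dots> \<le> 2 powr (- real m) * \<bar>r\<bar>" using rbig by simp
    finally show ?thesis using err by (simp add: r_def)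
  qed
qed

definition tolerance :: "int \<Rightarrow> real" where
  "tolerance p = 10 powr (- real_of_int p) / (1 + 10 powr (- real_of_int p))"

lemma tolerance_bounds: "0 < tolerance p" "tolerance p < 1"
proof -
  have pos: "10 powr (- real_of_int p) > 0" by simp
  show "0 < tolerance p" unfolding tolerance_def by (intro divide_pos_pos pos) (use pos in linarith)
  have den: "0 < 1 + 10 powr (- real_of_int p)" using pos by linarith
  show "tolerance p < 1" unfolding tolerance_def using den by (simp add: divide_less_eq)
qed

section \<open>Computed sequences of a C^1 self-map of an interval\<close>

locale fp_map =
  fixes a b :: real and f f' :: "real \<Rightarrow> real" and rd :: "nat \<Rightarrow> real \<Rightarrow> real"
    and Lbar :: "real \<Rightarrow> real \<Rightarrow> real" and Lmax :: real
  assumes f_maps: "\<And>y. y \<in> {a..b} \<Longrightarrow> f y \<in> {a..b}"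
    and f_deriv: "\<And>y. y \<in> {a..b} \<Longrightarrow> (f has_real_derivative f' y) (at y within {a..b})"
    and f'_cont: "continuous_on {a..b} f'"
    and rd: "is_round_nearest rd"
    and Lbar_bounds: "\<And>a' e. a' \<in> {a..b} \<Longrightarrow> e \<ge> 0 \<Longrightarrow>
                        Lip {a..b} f' a' e \<le> Lbar a' e \<and> Lbar a' e \<le> Lmax"
    and Lmax_nonneg: "Lmax \<ge> 0"
begin

text \<open>Lip really bounds |f'| on its window: the supremum exists because f' is bounded.\<close>
lemma Lip_upper:
  assumes "y \<in> {a' - e..a' + e}" and "y \<in> {a..b}"
  shows "\<bar>f' y\<bar> \<le> Lip {a..b} f' a' e"
proof -
  obtain M where M: "\<forall>y\<in>{a..b}. \<bar>f' y\<bar> \<le> M"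
    using compact_imp_bounded[OF compact_continuous_image[OF f'_cont compact_Icc]]
    unfolding bounded_iff by auto
  show ?thesis unfolding Lip_def
    by (rule cSup_upper) (use M assms in \<open>auto intro!: bdd_aboveI[where M=M]\<close>)
qed

lemma f_local_lipschitz:
  assumes u: "u \<in> {a..b}" and v: "v \<in> {a..b}" and uv: "\<bar>u - v\<bar> \<le> e"
  shows "\<bar>f u - f v\<bar> \<le> Lip {a..b} f' u e * \<bar>u - v\<bar>"
proof -
  let ?S = "{min u v..max u v}"
  have sub: "?S \<subseteq> {a..b}" using u v by auto
  have df: "(f has_field_derivative f' z) (at z within ?S)" if "z \<in> ?S" for z
    using f_deriv sub that by (meson DERIV_subset subsetD)
  have dn: "norm (f' z) \<le> Lip {a..b} f' u e" if z: "z \<in> ?S" for z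
  proof -
    have "z \<in> {u - e..u + e}" using z uv by (cases "u \<le> v") (auto simp: abs_le_iff)
    moreover have "z \<in> {a..b}" using z sub by blast
    ultimately show ?thesis using Lip_upper by simp
  qed
  have "norm (f u - f v) \<le> Lip {a..b} f' u e * norm (u - v)"
    by (rule field_differentiable_bound[OF convex_real_interval(5) df dn]) auto
  thus ?thesis by simp
qed

definition bound :: real where "bound = max \<bar>a\<bar> \<bar>b\<bar>"

lemma abs_le_bound: "y \<in> {a..b} \<Longrightarrow> \<bar>y\<bar> \<le> bound"
  by (auto simp: bound_def)

end

locale fp_orbit = fp_map +
  fixes x :: real
  assumes x_D: "x \<in> {a..b}"
    and comp_D: "\<And>m n. m \<ge> 1 \<Longrightarrow> fst (comp_seq rd f Lbar m x n) \<in> {a..b}"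
    and orbit_nonzero: "\<And>n. (f ^^ n) x \<noteq> 0"
begin

abbreviation orbit :: "nat \<Rightarrow> real" where "orbit n \<equiv> (f ^^ n) x"

definition xhat :: "nat \<Rightarrow> nat \<Rightarrow> real" where "xhat m n = fst (comp_seq rd f Lbar m x n)"
definition ebar :: "nat \<Rightarrow> nat \<Rightarrow> real" where "ebar m n = snd (comp_seq rd f Lbar m x n)"

lemma xhat_0: "xhat m 0 = rd m x"
  and ebar_0: "ebar m 0 = 2 powr (- real m) * \<bar>xhat m 0\<bar>"
  and xhat_Suc: "xhat m (Suc n) = rd m (f (xhat m n))"
  and ebar_Suc: "ebar m (Suc n) = Lbar (xhat m n) (ebar m n) * ebar m n
                                   + 2 powr (- real m) * \<bar>xhat m (Suc n)\<bar>"
  by (simp_all add: xhat_def ebar_def split_beta Let_def)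

lemma xhat_D: "m \<ge> 1 \<Longrightarrow> xhat m n \<in> {a..b}"
  using comp_D by (simp add: xhat_def)

lemma orbit_D: "orbit n \<in> {a..b}"
  by (induction n) (use x_D f_maps in auto)

lemma x_nonzero: "x \<noteq> 0"
  using orbit_nonzero[of 0] by simp

lemma bound_pos: "bound > 0"
  using abs_le_bound[OF x_D] x_nonzero by linarith

text \<open>The
  rounding error is covered by the relative bound, the propagated error by the mean
  value inequality on the window of radius ebar around the computed point.\<close>
lemma ebar_certified:
  assumes m: "m \<ge> 1"
  shows "\<bar>xhat m n - orbit n\<bar> \<le> ebar m n"
proof (induction n)
  case 0 show ?case using round_err[OF rd m, of x] by (simp add: xhat_0 ebar_0)
next
  case (Suc n)
  let ?L = "Lip {a..b} f' (xhat m n) (ebar m n)"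
  have e0: "ebar m n \<ge> 0" using Suc by (meson abs_ge_zero order_trans)
  have L0: "0 \<le> ?L"
    using Lip_upper[of "xhat m n" "xhat m n" "ebar m n"] e0 xhat_D[OF m] by auto
  have "\<bar>xhat m (Suc n) - orbit (Suc n)\<bar>
        \<le> \<bar>rd m (f (xhat m n)) - f (xhat m n)\<bar> + \<bar>f (xhat m n) - f (orbit n)\<bar>"
    by (simp add: xhat_Suc)
  also have "\<dots> \<le> 2 powr (-real m) * \<bar>xhat m (Suc n)\<bar> + ?L * \<bar>xhat m n - orbit n\<bar>"
    using round_err[OF rd m, of "f (xhat m n)"] f_local_lipschitz[OF xhat_D[OF m] orbit_D Suc.IH]
    by (simp add: xhat_Suc)
  also have "\<dots> \<le> 2 powr (-real m) * \<bar>xhat m (Suc n)\<bar> + ?L * ebar m n"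
    using Suc.IH L0 by (simp add: mult_left_mono)
  also have "\<dots> \<le> 2 powr (-real m) * \<bar>xhat m (Suc n)\<bar> + Lbar (xhat m n) (ebar m n) * ebar m n"
    using Lbar_bounds[OF xhat_D[OF m] e0] e0 by (simp add: mult_right_mono)
  also have "\<dots> = ebar m (Suc n)" by (simp add: ebar_Suc)
  finally show ?case .
qed

lemma ebar_nonneg: "m \<ge> 1 \<Longrightarrow> ebar m n \<ge> 0"
  using ebar_certified by (meson abs_ge_zero order_trans)

text \<open>Lower growth bound: since the true orbit lies in the window of the computed point,
  Lbar dominates |f'| along the true orbit, so ebar grows at least like the product of
  the true derivatives.  This is where the Lyapunov exponent enters.\<close>
lemma ebar_lower:
  assumes m: "m \<ge> 1"
  shows "ebar m 0 * (\<Prod>k<n. \<bar>f' (orbit k)\<bar>) \<le> ebar m n"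
proof (induction n)
  case 0 show ?case by simp
next
  case (Suc n)
  have e0: "ebar m n \<ge> 0" using ebar_nonneg[OF m] .
  have in_window: "orbit n \<in> {xhat m n - ebar m n..xhat m n + ebar m n}"
    using ebar_certified[OF m, of n] by (auto simp: abs_le_iff)
  have "ebar m 0 * (\<Prod>k<Suc n. \<bar>f' (orbit k)\<bar>) = \<bar>f' (orbit n)\<bar> * (ebar m 0 * (\<Prod>k<n. \<bar>f' (orbit k)\<bar>))"
    by (simp add: ac_simps)
  also have "\<dots> \<le> \<bar>f' (orbit n)\<bar> * ebar m n" using Suc by (simp add: mult_left_mono)
  also have "\<dots> \<le> Lip {a..b} f' (xhat m n) (ebar m n) * ebar m n"
    using Lip_upper[OF in_window orbit_D] e0 by (rule mult_right_mono)
  also have "\<dots> \<le> Lbar (xhat m n) (ebar m n) * ebar m n"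
    using Lbar_bounds[OF xhat_D[OF m] e0] e0 by (simp add: mult_right_mono)
  also have "\<dots> \<le> ebar m (Suc n)" by (simp add: ebar_Suc)
  finally show ?case .
qed

lemma ebar_upper:
  assumes m: "m \<ge> 1"
  shows "ebar m n \<le> 2 powr (- real m) * bound * (1 + Lmax) ^ n"
proof (induction n)
  case 0 show ?case using abs_le_bound[OF xhat_D[OF m]] by (simp add: ebar_0 mult_left_mono)
next
  case (Suc n)
  have p0: "0 \<le> 2 powr (- real m) * bound" using bound_pos by simp
  have q1: "1 \<le> (1 + Lmax) ^ n" using Lmax_nonneg by simp
  have "ebar m (Suc n) \<le> Lmax * ebar m n + 2 powr (- real m) * bound"
    using Lbar_bounds[OF xhat_D[OF m] ebar_nonneg[OF m]] ebar_nonneg[OF m]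
      abs_le_bound[OF xhat_D[OF m]]
    by (simp add: ebar_Suc) (intro add_mono mult_right_mono mult_left_mono; simp)
  also have "\<dots> \<le> Lmax * (2 powr (- real m) * bound * (1 + Lmax) ^ n)
                  + 2 powr (- real m) * bound * (1 + Lmax) ^ n"
    using Suc Lmax_nonneg p0 q1 by (intro add_mono mult_left_mono) (auto simp: mult_le_cancel_left1)
  also have "\<dots> = 2 powr (- real m) * bound * (1 + Lmax) ^ Suc n" by (simp add: algebra_simps)
  finally show ?case .
qed

text \<open>At sufficiently high precision any relative accuracy c < 1 is met up to time N:
  ebar tends to 0 as m grows, uniformly on [0,N], while the exact orbit stays away
  from 0 there.\<close>
lemma accurate_precision_exists:
  assumes c0: "0 < c" and c1: "c < 1"
  shows "\<exists>m\<ge>1. \<forall>n\<le>N. ebar m n \<le> c * \<bar>xhat m n\<bar>"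
proof -
  define \<mu> where "\<mu> = Min ((\<lambda>n. \<bar>orbit n\<bar>) ` {0..N})"
  have \<mu>_le: "\<mu> \<le> \<bar>orbit n\<bar>" if "n \<le> N" for n unfolding \<mu>_def using that by (intro Min_le) auto
  have \<mu>0: "\<mu> > 0" unfolding \<mu>_def using orbit_nonzero by (subst Min_gr_iff) auto
  define G where "G = bound * (1 + Lmax) ^ N"
  have G0: "G > 0" using bound_pos Lmax_nonneg by (simp add: G_def)
  obtain k where k: "(1/2::real) ^ k < c * \<mu> / (2 * G)"
    using real_arch_pow_inv[of "c * \<mu> / (2 * G)" "1/2"] c0 \<mu>0 G0 by auto
  define m where "m = Suc k"
  have m1: "m \<ge> 1" by (simp add: m_def)
  have "2 powr (- real m) = (1/2) ^ m"
    by (simp add: powr_minus powr_realpow power_one_over inverse_eq_divide)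
  also have "\<dots> = (1/2) ^ Suc k" by (simp add: m_def)
  also have "\<dots> \<le> (1/2) ^ k" by simp
  finally have "2 powr (- real m) * (2 * G) \<le> (1/2) ^ k * (2 * G)" using G0 by (intro mult_right_mono) auto
  moreover have "(1/2) ^ k * (2 * G) < c * \<mu>" using k G0 by (simp add: less_divide_eq)
  ultimately have "2 powr (- real m) * (2 * G) < c * \<mu>" by linarith
  hence small: "2 * (2 powr (- real m) * G) \<le> c * \<mu>" by (simp add: algebra_simps)
  have "ebar m n \<le> c * \<bar>xhat m n\<bar>" if n: "n \<le> N" for n
  proof -
    have q: "(1 + Lmax) ^ n \<le> (1 + Lmax) ^ N" using Lmax_nonneg n by (intro power_increasing) auto
    have "ebar m n \<le> 2 powr (- real m) * bound * (1 + Lmax) ^ n" by (rule ebar_upper[OF m1])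
    also have "\<dots> \<le> 2 powr (- real m) * bound * (1 + Lmax) ^ N"
      using q bound_pos by (intro mult_left_mono) auto
    finally have "ebar m n \<le> 2 powr (- real m) * G" by (simp add: G_def mult.assoc)
    hence e1: "2 * ebar m n \<le> c * \<mu>" using small by linarith
    have "\<mu> - ebar m n \<le> \<bar>xhat m n\<bar>" using ebar_certified[OF m1, of n] \<mu>_le[OF n] by linarith
    hence "c * (\<mu> - ebar m n) \<le> c * \<bar>xhat m n\<bar>" using c0 by (intro mult_left_mono) auto
    moreover have "c * ebar m n \<le> ebar m n"
      by (rule mult_left_le_one_le) (use c0 c1 ebar_nonneg[OF m1, of n] in auto)
    ultimately show ?thesis using e1 by (simp add: right_diff_distrib)
  qed
  thus ?thesis using m1 by blast
qed

lemma m_min_eq: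
  "m_min rd f Lbar x N p = (LEAST m. m \<ge> 1 \<and> (\<forall>n\<le>N. ebar m n \<le> tolerance p * \<bar>xhat m n\<bar>))"
  by (simp add: m_min_def ebar_def xhat_def tolerance_def)

lemma m_min_spec:
  "m_min rd f Lbar x N p \<ge> 1 \<and>
   (\<forall>n\<le>N. ebar (m_min rd f Lbar x N p) n \<le> tolerance p * \<bar>xhat (m_min rd f Lbar x N p) n\<bar>)"
  unfolding m_min_eq
  by (rule LeastI_ex) (use accurate_precision_exists[OF tolerance_bounds] in blast)

text \<open>Meeting the accuracy demand up to time N caps ebar at time N by the size of D, while
  ebar_0 is about 2^-m |x|; with the lower growth bound this gives
  2^-m |x|/2 prod_{k<N} |f'(x_k)| \<le> bound.\<close>
lemma m_min_product_bound:
  fixes N :: nat and p :: int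
  defines "m \<equiv> m_min rd f Lbar x N p"
  shows "2 powr (- real m) * (\<bar>x\<bar> / 2) * (\<Prod>k<N. \<bar>f' (orbit k)\<bar>) \<le> bound"
proof -
  have m1: "m \<ge> 1" and acc: "\<forall>n\<le>N. ebar m n \<le> tolerance p * \<bar>xhat m n\<bar>"
    using m_min_spec unfolding m_def by auto
  have "2 powr (- real m) \<le> 2 powr (-1)" using m1 by (intro powr_mono) auto
  hence half: "ebar m 0 \<le> 1/2 * \<bar>xhat m 0\<bar>" unfolding ebar_0 by (intro mult_right_mono) auto
  have x0: "\<bar>x\<bar> / 2 \<le> \<bar>xhat m 0\<bar>" using ebar_certified[OF m1, of 0] half by simp
  define P where "P = (\<Prod>k<N. \<bar>f' (orbit k)\<bar>)"
  have P0: "P \<ge> 0" unfolding P_def by (simp add: prod_nonneg)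
  have "2 powr (- real m) * (\<bar>x\<bar> / 2) * P \<le> 2 powr (- real m) * \<bar>xhat m 0\<bar> * P"
    using x0 P0 by (intro mult_right_mono mult_left_mono) auto
  also have "\<dots> \<le> ebar m N" using ebar_lower[OF m1, of N] by (simp add: ebar_0 P_def)
  also have "\<dots> \<le> tolerance p * \<bar>xhat m N\<bar>" using acc by simp
  also have "\<dots> \<le> \<bar>xhat m N\<bar>" by (rule mult_left_le_one_le) (use tolerance_bounds[of p] in auto)
  also have "\<dots> \<le> bound" using abs_le_bound[OF xhat_D[OF m1]] .
  finally show ?thesis unfolding P_def .
qed

lemma m_min_ln_bound:
  assumes f'_nonzero: "\<And>k. f' (orbit k) \<noteq> 0"
  shows "(\<Sum>k<N. ln \<bar>f' (orbit k)\<bar>) + (ln (\<bar>x\<bar> / 2) - ln bound)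
           \<le> real (m_min rd f Lbar x N p) * ln 2"
proof -
  define m where "m = m_min rd f Lbar x N p"
  define P where "P = (\<Prod>k<N. \<bar>f' (orbit k)\<bar>)"
  have P0: "P > 0" unfolding P_def using f'_nonzero by (simp add: prod_pos)
  have x2: "\<bar>x\<bar> / 2 > 0" using x_nonzero by simp
  have "ln (2 powr (- real m) * (\<bar>x\<bar> / 2) * P) = ln (2 powr (- real m)) + ln (\<bar>x\<bar> / 2) + ln P"
    using P0 x2 ln_mult[of "2 powr (- real m) * (\<bar>x\<bar> / 2)" P] ln_mult[of "2 powr (- real m)" "\<bar>x\<bar> / 2"]
    by simp
  also have "ln (2 powr (- real m)) = - real m * ln 2" by simp
  also have "ln P = (\<Sum>k<N. ln \<bar>f' (orbit k)\<bar>)" unfolding P_def using f'_nonzero by (simp add: ln_prod)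
  finally have eq: "ln (2 powr (- real m) * (\<bar>x\<bar> / 2) * P)
                    = - real m * ln 2 + ln (\<bar>x\<bar> / 2) + (\<Sum>k<N. ln \<bar>f' (orbit k)\<bar>)" .
  have "2 powr (- real m) * (\<bar>x\<bar> / 2) * P \<le> bound"
    using m_min_product_bound[of N p] unfolding m_def P_def .
  hence "ln (2 powr (- real m) * (\<bar>x\<bar> / 2) * P) \<le> ln bound"
    by (rule ln_mono) (use P0 x2 in simp)
  thus ?thesis using eq unfolding m_def by linarith
qed

end

section \<open>From finite-time bounds to the growth rate\<close>

text \<open>If the integer sequence u satisfies c u_N \<ge> S_N + C with S_N / N \<rightarrow> \<lambda>, then
  limsup u_N / N \<ge> max 0 \<lambda> / c (the 0 comes for free because u_N \<ge> 0).\<close>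
lemma limsup_ratio_lower_bound:
  fixes u :: "nat \<Rightarrow> nat" and S :: "nat \<Rightarrow> real"
  assumes c: "c > 0" and bound: "\<And>N. S N + C \<le> real (u N) * c"
    and lim: "(\<lambda>N. 1 / real N * S N) \<longlonglongrightarrow> lam"
  shows "ereal (max 0 lam / c) \<le> limsup (\<lambda>N. ereal (real (u N) / real N))"
proof -
  define g where "g = (\<lambda>N. max 0 ((1 / real N * S N + C / real N) / c))"
  have "g \<longlonglongrightarrow> max 0 ((lam + 0) / c)"
    unfolding g_def by (intro tendsto_intros lim) (use c in auto)
  moreover have "max 0 ((lam + 0) / c) = max 0 lam / c" using c by (auto simp: max_def field_simps)
  ultimately have g_lim: "g \<longlonglongrightarrow> max 0 lam / c" by simp
  have "g N \<le> real (u N) / real N" if N: "N \<ge> 1" for N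
  proof -
    have "(1 / real N * S N + C / real N) / c = (S N + C) / (real N * c)"
      using N c by (simp add: field_simps)
    also have "\<dots> \<le> real (u N) * c / (real N * c)"
      using bound[of N] N c by (intro divide_right_mono) auto
    also have "\<dots> = real (u N) / real N" using c by simp
    finally show ?thesis unfolding g_def by simp
  qed
  hence "eventually (\<lambda>N. ereal (g N) \<le> ereal (real (u N) / real N)) sequentially"
    by (intro eventually_sequentiallyI[of 1]) simp
  hence "limsup (\<lambda>N. ereal (g N)) \<le> limsup (\<lambda>N. ereal (real (u N) / real N))"
    by (rule Limsup_mono)
  moreover have "limsup (\<lambda>N. ereal (g N)) = ereal (max 0 lam / c)"
    by (rule lim_imp_Limsup) (auto intro: g_lim)
  ultimately show ?thesis by simp
qed

theorem mainTheorem6: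
  fixes a b :: real and f f' f'' :: "real \<Rightarrow> real"
    and rd :: "nat \<Rightarrow> real \<Rightarrow> real" and Lbar :: "real \<Rightarrow> real \<Rightarrow> real"
    and Lmax K x lam :: real and p :: int
  assumes ab: "a < b"
    and f_maps: "\<forall>y\<in>{a..b}. f y \<in> {a..b}"
    and f_deriv: "\<forall>y\<in>{a..b}. (f has_real_derivative f' y) (at y within {a..b})"
    and f'_deriv: "\<forall>y\<in>{a..b}. (f' has_real_derivative f'' y) (at y within {a..b})"
    and f''_cont: "continuous_on {a..b} f''"
    and f''_bdd: "bounded (f'' ` {a..b})"
    and rd: "is_round_nearest rd"
    and Lmax: "Lmax \<ge> 0" and K: "K \<ge> 0"
    and Lbar: "\<forall>a'\<in>{a..b}. \<forall>e\<ge>0. Lip {a..b} f' a' e \<le> Lbar a' e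
                 \<and> Lbar a' e \<le> min Lmax (Lip {a..b} f' a' e + K * e)"
    and x_rat: "x \<in> \<rat>" and x_D: "x \<in> {a..b}"
    and comp_D: "\<forall>m\<ge>1. \<forall>n. fst (comp_seq rd f Lbar m x n) \<in> {a..b}"
    and nonzero: "\<forall>n. (f ^^ n) x \<noteq> 0"
    and min_growth: "(\<lambda>N. log 2 (Min ((\<lambda>n. \<bar>(f ^^ n) x\<bar>) ` {0..N})) / real N) \<longlonglongrightarrow> 0"
    and lyap: "has_lyapunov f f' x lam"
  shows "sigma rd f Lbar x p \<ge> ereal (max 0 lam / ln 2)"
proof -
  have f'_cont: "continuous_on {a..b} f'"
    using f'_deriv by (meson DERIV_continuous continuous_on_eq_continuous_within)
  interpret fp_orbit a b f f' rd Lbar Lmax x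
    using f_maps f_deriv f'_cont rd Lbar Lmax x_D comp_D nonzero by unfold_locales auto
  have f'_nonzero: "\<And>k. f' (orbit k) \<noteq> 0"
    and lyap_lim: "(\<lambda>N. 1 / real N * (\<Sum>k<N. ln \<bar>f' (orbit k)\<bar>)) \<longlonglongrightarrow> lam"
    using lyap unfolding has_lyapunov_def by auto
  show ?thesis unfolding sigma_def
    by (rule limsup_ratio_lower_bound[OF _ m_min_ln_bound[OF f'_nonzero] lyap_lim]) simp
qed

end
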